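(* There exist a finite alphabet $\Sigma$ and a set $L\subseteq\mathcal{T}_\Sigma$ of infinite $\Sigma$-labeled binary trees recognized by a deterministic automaton such that $\mu(L)$ is an irrational number.
   Context: The full binary tree is $V=\{L,R\}^*$ (root $\epsilon$). A $\Sigma$-tree is a map $t:V\to\Sigma$, and $\mathcal{T}_\Sigma=\Sigma^V$. The coin-flipping measure $\mu$ on $\mathcal{T}_\Sigma$ is the product probability measure with $\mu(\{t : t(v_1)=a_1,\dots,t(v_k)=a_k\})=|\Sigma|^{-k}$ for pairwise distinct $v_i$. An alternating parity tree automaton is $\mathcal{A}=\langle\Sigma,Q,q_0,\delta,\pi\rangle$ with finite $Q$, $q_0\in Q$, $\pi:Q\to\omega$ and $\delta(q,a)$ a positive Boolean combination (using $\wedge,\vee$) of elements of $\{L,R\}\times Q$. A tree $t$ is accepted if player $\exists$ wins the game starting at $\langle\epsilon,q_0\rangle$ in which: from $\langle x,q\rangle$ the game moves to $\langle x,\delta(q,t(x))\rangle$; at a disjunction $\exists$ chooses a disjunct, at a conjunction $\forall$ chooses a conjunct; $\langle x,(D,q)\rangle$ moves to $\langle xD,q\rangle$ for $D\in\{L,R\}$; an infinite play is won by $\exists$ iff the largest priority $\pi(q)$ among states $q$ visited infinitely often (in positions $\langle x,q\rangle$) is even. A deterministic automaton is one in which every $\delta(q,a)$ has the form $(L,q_L)\wedge(R,q_R)$. *)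

theory Defs
  imports "HOL-Probability.Probability"
begin

datatype dir = L | R

text \<open>Vertices of the full binary tree are words over {L,R}; trees over labels 'a are
  maps dir list => 'a (labels restricted to the alphabet A where relevant).\<close>

definition coin_measure :: "'a set \<Rightarrow> (dir list \<Rightarrow> 'a) measure" where
  "coin_measure A = (\<Pi>\<^sub>M v\<in>(UNIV :: dir list set). uniform_count_measure A)"

definition dsel :: "dir \<Rightarrow> 'q \<times> 'q \<Rightarrow> 'q" where
  "dsel D p = (case D of L \<Rightarrow> fst p | R \<Rightarrow> snd p)"

text \<open>The unique run of a deterministic automaton: delta q a = (q_L, q_R) encodes
  the transition (L,q_L) /\ (R,q_R). drun delta q t x is the state at vertex x
  when starting in state q at the root.\<close>
fun drun :: "('q \<Rightarrow> 'a \<Rightarrow> 'q \<times> 'q) \<Rightarrow> 'q \<Rightarrow> (dir list \<Rightarrow> 'a) \<Rightarrow> dir list \<Rightarrow> 'q" where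
  "drun delta q t [] = q"
| "drun delta q t (D # x) = drun delta (dsel D (delta q (t []))) (\<lambda>y. t (D # y)) x"

definition branch_vertex :: "(nat \<Rightarrow> dir) \<Rightarrow> nat \<Rightarrow> dir list" where
  "branch_vertex \<beta> n = map \<beta> [0..<n]"

definition parity_ok :: "('q \<Rightarrow> nat) \<Rightarrow> (nat \<Rightarrow> 'q) \<Rightarrow> bool" where
  "parity_ok \<pi> f = even (Max (\<pi> ` {q. \<exists>\<^sub>\<infinity>n. f n = q}))"

text \<open>Language of a deterministic parity tree automaton over alphabet A:
  player forall chooses the direction at each step, so a tree is accepted iff every
  branch of the unique run satisfies the parity condition.\<close>
definition det_lang ::
  "'a set \<Rightarrow> 'q \<Rightarrow> ('q \<Rightarrow> 'a \<Rightarrow> 'q \<times> 'q) \<Rightarrow> ('q \<Rightarrow> nat) \<Rightarrow> (dir list \<Rightarrow> 'a) set" where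
  "det_lang A q0 delta \<pi> =
     {t. (\<forall>x. t x \<in> A) \<and>
         (\<forall>\<beta>. parity_ok \<pi> (\<lambda>n. drun delta q0 t (branch_vertex \<beta> n)))}"

definition det_automaton :: "'a set \<Rightarrow> 'q set \<Rightarrow> 'q \<Rightarrow> ('q \<Rightarrow> 'a \<Rightarrow> 'q \<times> 'q) \<Rightarrow> bool" where
  "det_automaton A Q q0 delta \<longleftrightarrow> finite Q \<and> q0 \<in> Q \<and>
     (\<forall>q\<in>Q. \<forall>a\<in>A. fst (delta q a) \<in> Q \<and> snd (delta q a) \<in> Q)"

end

theory Submission
  imports Defs "HOL-Computational_Algebra.Primes"
begin

text \<open>Over the letters 0, 1, 2, accept a tree iff on every branch a 0 occurs and only 2s precede
  it. This is the event that the branching process in which every vertex dies (0), fails (1) or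
  splits (2), each with probability 1/3, dies out without failing. A tree is accepted iff its root
  is 0, or its root is 2 and both subtrees are accepted; as root and subtrees are independent under
  the coin-flipping measure, x = \<mu>(L) satisfies x = 1/3 + x^2/3, i.e. (3 - 2x)^2 = 5, so x is
  irrational. L is measurable because, by Koenig's lemma, it is the union of the sets of trees
  accepted within depth n.\<close>

lemma prime_not_rat_square:
  fixes x :: real
  assumes "prime p" and "x \<in> \<rat>"
  shows "x\<^sup>2 \<noteq> real p"
proof
  assume square: "x\<^sup>2 = real p"
  have p: "p > 0"
    using \<open>prime p\<close> by (rule prime_gt_0_nat)
  obtain m n :: nat where "n \<noteq> 0" and "\<bar>x\<bar> = m / n" and "coprime m n"
    using \<open>x \<in> \<rat>\<close> by (rule Rats_abs_nat_div_natE)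
  then have "real m = \<bar>x\<bar> * n"
    by simp
  then have "real m ^ 2 = x\<^sup>2 * real n ^ 2"
    by (simp add: power_mult_distrib)
  then have "real (m\<^sup>2) = real (p * n\<^sup>2)"
    using square by simp
  then have m: "m\<^sup>2 = p * n\<^sup>2"
    by (simp only: of_nat_eq_iff)
  then have "p dvd m\<^sup>2"
    by simp
  then have "p dvd m"
    by (rule prime_dvd_power[OF \<open>prime p\<close>])
  then obtain k where "m = p * k" ..
  with m have "p * (p * k\<^sup>2) = p * n\<^sup>2"
    by (metis power_mult_distrib power2_eq_square mult.assoc)
  then have "n\<^sup>2 = p * k\<^sup>2"
    using p by simp
  then have "p dvd n\<^sup>2"
    by simp
  then have "p dvd n"
    by (rule prime_dvd_power[OF \<open>prime p\<close>])
  with \<open>p dvd m\<close> \<open>coprime m n\<close> have "p dvd 1"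
    using coprime_common_divisor by blast
  with \<open>prime p\<close> show False
    by simp
qed

abbreviation tree_measure :: "'a measure \<Rightarrow> (dir list \<Rightarrow> 'a) measure" where
  "tree_measure M \<equiv> \<Pi>\<^sub>M v\<in>(UNIV :: dir list set). M"

fun tree_node :: "'a \<Rightarrow> (dir list \<Rightarrow> 'a) \<Rightarrow> (dir list \<Rightarrow> 'a) \<Rightarrow> dir list \<Rightarrow> 'a" where
  "tree_node a l r [] = a"
| "tree_node a l r (L # v) = l v"
| "tree_node a l r (R # v) = r v"

definition subtree :: "dir \<Rightarrow> (dir list \<Rightarrow> 'a) \<Rightarrow> dir list \<Rightarrow> 'a" where
  "subtree D t = (\<lambda>v. t (D # v))"

lemma subtree_tree_node [simp]:
  "subtree L (tree_node a l r) = l" "subtree R (tree_node a l r) = r"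
  by (auto simp: subtree_def)

lemma all_dir: "(\<forall>D. P D) \<longleftrightarrow> P L \<and> P R"
  by (metis dir.exhaust)

lemma all_dir_list: "(\<forall>v. P v) \<longleftrightarrow> P [] \<and> (\<forall>v. P (L # v)) \<and> (\<forall>v. P (R # v))"
  by (metis dir.exhaust list.exhaust)

lemma tree_node_labels_iff:
  "(\<forall>v. tree_node a l r v \<in> X) \<longleftrightarrow> a \<in> X \<and> (\<forall>v. l v \<in> X) \<and> (\<forall>v. r v \<in> X)"
  by (subst all_dir_list) simp

lemma space_tree_measure: "space (tree_measure M) = {t. \<forall>v. t v \<in> space M}"
  by (auto simp: space_PiM)

lemma measurable_subtree: "subtree D \<in> tree_measure M \<rightarrow>\<^sub>M tree_measure M"
  unfolding subtree_def
  by (rule measurable_PiM_single') (auto simp: space_PiM intro: measurable_component_singleton)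

lemma measurable_tree_node:
  "(\<lambda>(a, l, r). tree_node a l r) \<in> M \<Otimes>\<^sub>M (tree_measure M \<Otimes>\<^sub>M tree_measure M) \<rightarrow>\<^sub>M tree_measure M"
proof (rule measurable_PiM_single')
  fix v :: "dir list"
  show "(\<lambda>x. (case x of (a, l, r) \<Rightarrow> tree_node a l r) v) \<in> M \<Otimes>\<^sub>M (tree_measure M \<Otimes>\<^sub>M tree_measure M) \<rightarrow>\<^sub>M M"
    by (cases v; cases "hd v") (simp_all add: split_beta')
qed (auto simp: space_pair_measure space_PiM PiE_UNIV_domain Pi_iff tree_node_labels_iff[THEN iffD2, rule_format])

lemma prod_dir_list_split:
  assumes "finite J"
  shows "(\<Prod>j\<in>J. f j) =
    (if [] \<in> J then f [] else 1) * (\<Prod>w\<in>Cons L -` J. f (L # w)) * (\<Prod>w\<in>Cons R -` J. f (R # w))"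
proof -
  have J: "J = (J \<inter> {[]}) \<union> (Cons L ` (Cons L -` J) \<union> Cons R ` (Cons R -` J))"
    by (auto simp: image_iff) (metis dir.exhaust neq_Nil_conv)
  have "finite (Cons D -` J)" for D
    using assms by (auto intro: finite_vimageI)
  then have split: "(\<Prod>j\<in>J. f j) =
      (\<Prod>j\<in>J \<inter> {[]}. f j) * ((\<Prod>j\<in>Cons L ` (Cons L -` J). f j) * (\<Prod>j\<in>Cons R ` (Cons R -` J). f j))"
    using assms by (subst J) (subst prod.union_disjoint; auto simp: prod.union_disjoint)+
  have reindex: "(\<Prod>j\<in>Cons D ` (Cons D -` J). f j) = (\<Prod>w\<in>Cons D -` J. f (D # w))" for D
    by (subst prod.reindex) auto
  have root: "(\<Prod>j\<in>J \<inter> {[]}. f j) = (if [] \<in> J then f [] else 1)"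
    by (auto simp: Int_absorb1 Int_absorb2)
  show ?thesis
    unfolding split reindex root by (simp only: mult.assoc)
qed

lemma mem_prod_emb_UNIV:
  "x \<in> prod_emb UNIV M J (\<Pi>\<^sub>E j\<in>J. F j) \<longleftrightarrow> (\<forall>i. x i \<in> space (M i)) \<and> (\<forall>j\<in>J. x j \<in> F j)"
  by (auto simp: prod_emb_def)

lemma vimage_tree_node_cylinder:
  assumes "\<And>j. j \<in> J \<Longrightarrow> F j \<subseteq> space M"
  shows "(\<lambda>(a, l, r). tree_node a l r) -` prod_emb UNIV (\<lambda>_. M) J (\<Pi>\<^sub>E j\<in>J. F j)
      \<inter> space (M \<Otimes>\<^sub>M (tree_measure M \<Otimes>\<^sub>M tree_measure M)) =
    (if [] \<in> J then F [] else space M) \<times>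
    (prod_emb UNIV (\<lambda>_. M) (Cons L -` J) (\<Pi>\<^sub>E w\<in>Cons L -` J. F (L # w)) \<times>
     prod_emb UNIV (\<lambda>_. M) (Cons R -` J) (\<Pi>\<^sub>E w\<in>Cons R -` J. F (R # w)))"
proof -
  have "(\<forall>j\<in>J. tree_node a l r j \<in> F j) \<longleftrightarrow>
      ([] \<in> J \<longrightarrow> a \<in> F []) \<and> (\<forall>w\<in>Cons L -` J. l w \<in> F (L # w)) \<and> (\<forall>w\<in>Cons R -` J. r w \<in> F (R # w))"
    for a l r
    using all_dir_list[of "\<lambda>j. j \<in> J \<longrightarrow> tree_node a l r j \<in> F j"] by auto
  then show ?thesis
    using assms[of "[]"]
    by (auto simp: mem_prod_emb_UNIV space_pair_measure space_tree_measure tree_node_labels_iff)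
qed

lemma distr_tree_node:
  assumes "prob_space M"
  shows "distr (M \<Otimes>\<^sub>M (tree_measure M \<Otimes>\<^sub>M tree_measure M)) (tree_measure M) (\<lambda>(a, l, r). tree_node a l r)
    = tree_measure M"
proof -
  interpret M: prob_space M by fact
  interpret T: product_prob_space "\<lambda>_. M" "UNIV :: dir list set" ..
  interpret TT: pair_prob_space "tree_measure M" "tree_measure M" ..
  let ?cyl = "\<lambda>J F. prod_emb UNIV (\<lambda>_::dir list. M) J (\<Pi>\<^sub>E j\<in>J. F j)"
  show ?thesis
  proof (rule T.PiM_eq)
    fix J :: "dir list set" and F
    assume J: "finite J" and F: "\<And>j. j \<in> J \<Longrightarrow> F j \<in> sets M"
    let ?E = "if [] \<in> J then F [] else space M"
    let ?F = "\<lambda>D. ?cyl (Cons D -` J) (\<lambda>w. F (D # w))"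
    have fin: "finite (Cons D -` J)" for D
      using J by (auto intro: finite_vimageI)
    have F_sets: "?F D \<in> sets (tree_measure M)" for D
      using F fin by (intro sets_PiM_I) auto
    have F_measure: "emeasure (tree_measure M) (?F D) = (\<Prod>w\<in>Cons D -` J. emeasure M (F (D # w)))" for D
      using F fin by (intro T.emeasure_PiM_emb) auto
    have "emeasure (distr (M \<Otimes>\<^sub>M (tree_measure M \<Otimes>\<^sub>M tree_measure M)) (tree_measure M)
          (\<lambda>(a, l, r). tree_node a l r)) (?cyl J F)
        = emeasure (M \<Otimes>\<^sub>M (tree_measure M \<Otimes>\<^sub>M tree_measure M)) (?E \<times> (?F L \<times> ?F R))"
      using F J sets.sets_into_space[OF F]
      by (simp add: emeasure_distr measurable_tree_node sets_PiM_I_finite vimage_tree_node_cylinder)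
    also have "\<dots> = emeasure M ?E * (emeasure (tree_measure M) (?F L) * emeasure (tree_measure M) (?F R))"
      using F F_sets
      by (simp add: TT.P.emeasure_pair_measure_Times T.emeasure_pair_measure_Times
          M.emeasure_space_1 pair_measureI)
    also have "\<dots> = (\<Prod>j\<in>J. emeasure M (F j))"
      by (simp add: prod_dir_list_split[OF J] F_measure M.emeasure_space_1 mult.assoc)
    finally show "emeasure (distr (M \<Otimes>\<^sub>M (tree_measure M \<Otimes>\<^sub>M tree_measure M)) (tree_measure M)
          (\<lambda>(a, l, r). tree_node a l r)) (?cyl J F) = (\<Prod>j\<in>J. emeasure M (F j))" .
  qed simp
qed

lemma space_coin_measure: "space (coin_measure A) = {t. \<forall>x. t x \<in> A}"
  by (simp add: coin_measure_def space_tree_measure space_uniform_count_measure)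

lemma prob_space_coin_measure: "finite A \<Longrightarrow> A \<noteq> {} \<Longrightarrow> prob_space (coin_measure A)"
  unfolding coin_measure_def by (intro prob_space_PiM prob_space_uniform_count_measure)

lemma sets_root_in:
  assumes "X \<in> sets M"
  shows "{t \<in> space (tree_measure M). t [] \<in> X} \<in> sets (tree_measure M)"
proof -
  have "(\<lambda>t. t []) -` X \<inter> space (tree_measure M) \<in> sets (tree_measure M)"
    using assms by (intro measurable_sets[OF measurable_component_singleton]) auto
  then show ?thesis
    by (simp add: vimage_def Int_def conj_commute)
qed

lemma measure_pair_measure_Times:
  "sigma_finite_measure N \<Longrightarrow> A \<in> sets M \<Longrightarrow> B \<in> sets N \<Longrightarrow>
    measure (M \<Otimes>\<^sub>M N) (A \<times> B) = measure M A * measure N B"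
  by (simp add: measure_def sigma_finite_measure.emeasure_pair_measure_Times enn2real_mult)

lemma drun_Cons_subtree:
  "drun \<delta> q t (D # x) = drun \<delta> (dsel D (\<delta> q (t []))) (subtree D t) x"
  by (simp add: subtree_def)

lemma branch_vertex_Suc:
  "branch_vertex \<beta> (Suc n) = \<beta> 0 # branch_vertex (\<lambda>i. \<beta> (Suc i)) n"
  by (simp add: branch_vertex_def upt_conv_Cons map_Suc_upt[symmetric] del: upt_Suc)

lemma parity_ok_Suc_iff: "parity_ok \<pi> (\<lambda>n. f (Suc n)) \<longleftrightarrow> parity_ok \<pi> f"
proof -
  have "(\<exists>\<^sub>\<infinity>n. f (Suc n) = q) \<longleftrightarrow> (\<exists>\<^sub>\<infinity>n. f n = q)" for q
    using MOST_Suc_iff[of "\<lambda>n. f n \<noteq> q"] unfolding frequently_def by simp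
  then show ?thesis
    by (simp add: parity_ok_def)
qed

lemma parity_ok_const: "parity_ok \<pi> (\<lambda>n. q) \<longleftrightarrow> even (\<pi> q)"
proof -
  have "{q'. \<exists>\<^sub>\<infinity>n::nat. q = q'} = {q}"
    by auto
  then show ?thesis
    by (simp add: parity_ok_def)
qed

lemma det_lang_iff_subtrees:
  "t \<in> det_lang A q \<delta> \<pi> \<longleftrightarrow>
    (\<forall>x. t x \<in> A) \<and> (\<forall>D. subtree D t \<in> det_lang A (dsel D (\<delta> q (t []))) \<delta> \<pi>)"
proof -
  let ?acc = "\<lambda>q t \<beta>. parity_ok \<pi> (\<lambda>n. drun \<delta> q t (branch_vertex \<beta> n))"
  have acc_Suc: "?acc q t \<beta> \<longleftrightarrow> ?acc (dsel (\<beta> 0) (\<delta> q (t []))) (subtree (\<beta> 0) t) (\<lambda>i. \<beta> (Suc i))" for \<beta>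
    using parity_ok_Suc_iff[of \<pi> "\<lambda>n. drun \<delta> q t (branch_vertex \<beta> n)"]
    by (simp add: branch_vertex_Suc subtree_def)
  have "(\<forall>\<beta>. ?acc q t \<beta>) \<longleftrightarrow> (\<forall>D \<beta>. ?acc (dsel D (\<delta> q (t []))) (subtree D t) \<beta>)"
  proof
    assume "\<forall>\<beta>. ?acc q t \<beta>"
    then show "\<forall>D \<beta>. ?acc (dsel D (\<delta> q (t []))) (subtree D t) \<beta>"
      using acc_Suc[of "case_nat _ _"] by simp
  qed (use acc_Suc in blast)
  moreover have "(\<forall>x. t x \<in> A) \<Longrightarrow> \<forall>x. subtree D t x \<in> A" for D
    by (simp add: subtree_def)
  ultimately show ?thesis
    unfolding det_lang_def by auto
qed

lemma drun_sink:
  assumes "\<And>a. \<delta> q a = (q, q)"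
  shows "drun \<delta> q t x = q"
  using assms by (induction x arbitrary: t) (auto simp: dsel_def split: dir.split)

lemma det_lang_sink:
  assumes "\<And>a. \<delta> q a = (q, q)"
  shows "det_lang A q \<delta> \<pi> = (if even (\<pi> q) then {t. \<forall>x. t x \<in> A} else {})"
  by (auto simp: det_lang_def drun_sink assms parity_ok_const)

lemma drun_branch_const:
  assumes "\<And>n. \<delta> q (ts n []) = (q, q)" and "\<And>n. ts (Suc n) = subtree (\<beta> n) (ts n)"
  shows "drun \<delta> q (ts 0) (branch_vertex \<beta> n) = q"
  using assms
proof (induction n arbitrary: ts \<beta>)
  case 0
  then show ?case
    by (simp add: branch_vertex_def)
next
  case (Suc n)
  have "drun \<delta> q (ts (Suc 0)) (branch_vertex (\<lambda>i. \<beta> (Suc i)) n) = q"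
    using Suc.IH[of "\<lambda>i. ts (Suc i)" "\<lambda>i. \<beta> (Suc i)"] Suc.prems(1) Suc.prems(2)[of "Suc _"] by blast
  moreover have "dsel (\<beta> 0) (\<delta> q (ts 0 [])) = q"
    using Suc.prems(1) by (simp add: dsel_def split: dir.split)
  ultimately show ?case
    by (simp only: branch_vertex_Suc drun_Cons_subtree Suc.prems(2))
qed

definition three_letters :: "nat set" where
  "three_letters = {0, 1, 2}"

text \<open>State 0 follows the letters 2 from the root; 1 is an accepting and 2 a rejecting sink.\<close>
definition extinction_delta :: "nat \<Rightarrow> nat \<Rightarrow> nat \<times> nat" where
  "extinction_delta q a =
    (if q = 0 then (if a = 0 then (1, 1) else if a = 1 then (2, 2) else (0, 0)) else (q, q))"

definition extinction_priority :: "nat \<Rightarrow> nat" where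
  "extinction_priority q = (if q = 1 then 0 else 1)"

abbreviation extinction_lang :: "(dir list \<Rightarrow> nat) set" where
  "extinction_lang \<equiv> det_lang three_letters 0 extinction_delta extinction_priority"

lemma det_automaton_extinction: "det_automaton three_letters {0, 1, 2} 0 extinction_delta"
  by (auto simp: det_automaton_def extinction_delta_def)

definition extinction_step :: "(dir list \<Rightarrow> nat) set \<Rightarrow> (dir list \<Rightarrow> nat) set" where
  "extinction_step X = {t. (\<forall>x. t x \<in> three_letters) \<and>
    (t [] = 0 \<or> t [] = 2 \<and> subtree L t \<in> X \<and> subtree R t \<in> X)}"

lemma mono_extinction_step: "mono extinction_step"
  by (rule monoI) (auto simp: extinction_step_def)

lemma extinction_step_lang: "extinction_step extinction_lang = extinction_lang"
proof (rule set_eqI)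
  fix t :: "dir list \<Rightarrow> nat"
  have accept: "det_lang three_letters 1 extinction_delta extinction_priority = {t. \<forall>x. t x \<in> three_letters}"
    by (subst det_lang_sink) (auto simp: extinction_delta_def extinction_priority_def)
  have reject: "det_lang three_letters 2 extinction_delta extinction_priority = {}"
    by (subst det_lang_sink) (auto simp: extinction_delta_def extinction_priority_def)
  have root: "dsel D (extinction_delta 0 0) = 1" "dsel D (extinction_delta 0 1) = 2"
    "dsel D (extinction_delta 0 2) = 0" for D
    by (cases D; simp add: extinction_delta_def dsel_def)+
  show "t \<in> extinction_step extinction_lang \<longleftrightarrow> t \<in> extinction_lang"
  proof (cases "\<forall>x. t x \<in> three_letters")
    case True
    then have step: "t \<in> extinction_lang \<longleftrightarrow>
        (\<forall>D. subtree D t \<in> det_lang three_letters (dsel D (extinction_delta 0 (t []))) extinction_delta extinction_priority)"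
      by (subst det_lang_iff_subtrees) simp
    have labels: "\<forall>x. subtree D t x \<in> three_letters" for D
      using True by (simp add: subtree_def)
    consider "t [] = 0" | "t [] = 1" | "t [] = 2"
      using spec[OF True, of "[]"] unfolding three_letters_def by (elim insertE) auto
    then show ?thesis
    proof cases
      case 1
      show ?thesis
        using step[unfolded 1 root accept] labels True 1 by (simp add: extinction_step_def)
    next
      case 2
      show ?thesis
        using step[unfolded 2 root reject] 2 by (simp add: extinction_step_def)
    next
      case 3
      show ?thesis
        using step[unfolded 3 root all_dir] True 3 by (simp add: extinction_step_def)
    qed
  qed (unfold det_lang_def extinction_step_def, blast)
qed

abbreviation extinct_by :: "nat \<Rightarrow> (dir list \<Rightarrow> nat) set" where
  "extinct_by n \<equiv> (extinction_step ^^ n) {}"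

lemma extinct_by_subset: "extinct_by n \<subseteq> extinction_lang"
proof (induction n)
  case (Suc n)
  then show ?case
    using monoD[OF mono_extinction_step Suc.IH] by (simp add: extinction_step_lang)
qed simp

lemma not_extinct_by_subtree:
  assumes "t \<in> extinction_lang - (\<Union>n. extinct_by n)"
  shows "t [] = 2 \<and> (\<exists>D. subtree D t \<in> extinction_lang - (\<Union>n. extinct_by n))"
proof -
  have t: "t \<in> extinction_step extinction_lang"
    using assms extinction_step_lang by simp
  have "t \<notin> extinct_by (Suc n)" for n
    using assms by blast
  then have not_extinct: "t \<notin> extinction_step (extinct_by n)" for n
    by simp
  have "t [] \<noteq> 0"
    using t not_extinct[of 0] by (auto simp: extinction_step_def)
  then have root: "t [] = 2" and "subtree L t \<in> extinction_lang" "subtree R t \<in> extinction_lang"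
    using t by (auto simp: extinction_step_def)
  then have sub: "subtree D t \<in> extinction_lang" for D
    by (cases D) auto
  have "\<exists>D. subtree D t \<notin> (\<Union>n. extinct_by n)"
  proof (rule ccontr)
    assume "\<not> ?thesis"
    then obtain m k where "subtree L t \<in> extinct_by m" "subtree R t \<in> extinct_by k"
      by blast
    then have "subtree L t \<in> extinct_by (max m k)" "subtree R t \<in> extinct_by (max m k)"
      using mono_funpow[OF mono_extinction_step] by (auto dest: monoD[of _ m "max m k"] monoD[of _ k "max m k"])
    then show False
      using t root not_extinct[of "max m k"] by (auto simp: extinction_step_def)
  qed
  then show ?thesis
    using root sub by blast
qed

lemma extinction_lang_eq_UN: "extinction_lang = (\<Union>n. extinct_by n)"
proof -
  let ?Bad = "extinction_lang - (\<Union>n. extinct_by n)"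
  have "?Bad = {}"
  proof (rule ccontr)
    assume "?Bad \<noteq> {}"
    then obtain t0 where "t0 \<in> ?Bad"
      by blast
    have "\<exists>ts. \<forall>n. ts n \<in> ?Bad \<and> (\<exists>D. ts (Suc n) = subtree D (ts n))"
    proof (rule dependent_nat_choice[of "\<lambda>_ t. t \<in> ?Bad" "\<lambda>_ t t'. \<exists>D. t' = subtree D t"])
      show "\<exists>t. t \<in> ?Bad"
        using \<open>t0 \<in> ?Bad\<close> by blast
    next
      fix t n assume "t \<in> ?Bad"
      then obtain D where "subtree D t \<in> ?Bad"
        using not_extinct_by_subtree by blast
      then show "\<exists>t'. t' \<in> ?Bad \<and> (\<exists>D. t' = subtree D t)"
        by blast
    qed
    then obtain ts where ts: "\<And>n. ts n \<in> ?Bad" and "\<forall>n. \<exists>D. ts (Suc n) = subtree D (ts n)"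
      by blast
    then obtain \<beta> where \<beta>: "\<And>n. ts (Suc n) = subtree (\<beta> n) (ts n)"
      by (auto dest: choice)
    have "extinction_delta 0 (ts n []) = (0, 0)" for n
      using not_extinct_by_subtree[OF ts] by (simp add: extinction_delta_def)
    then have "drun extinction_delta 0 (ts 0) (branch_vertex \<beta> n) = 0" for n
      using \<beta> by (rule drun_branch_const)
    then have "\<not> parity_ok extinction_priority (\<lambda>n. drun extinction_delta 0 (ts 0) (branch_vertex \<beta> n))"
      by (simp add: parity_ok_const extinction_priority_def)
    moreover have "ts 0 \<in> extinction_lang"
      using ts by blast
    ultimately show False
      by (simp add: det_lang_def)
  qed
  then show ?thesis
    using extinct_by_subset by blast
qed

lemma sets_extinction_step:
  assumes "X \<in> sets (coin_measure three_letters)"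
  shows "extinction_step X \<in> sets (coin_measure three_letters)"
proof -
  let ?T = "tree_measure (uniform_count_measure three_letters)"
  have eq: "extinction_step X = {t \<in> space ?T. t [] \<in> {0}} \<union>
      ({t \<in> space ?T. t [] \<in> {2}} \<inter> (subtree L -` X \<inter> space ?T) \<inter> (subtree R -` X \<inter> space ?T))"
    by (auto simp: extinction_step_def space_tree_measure space_uniform_count_measure)
  have "{0} \<in> sets (uniform_count_measure three_letters)" "{2} \<in> sets (uniform_count_measure three_letters)"
    by (auto simp: sets_uniform_count_measure three_letters_def)
  then show ?thesis
    using assms unfolding eq coin_measure_def
    by (intro sets.Un sets.Int sets_root_in measurable_sets[OF measurable_subtree]) auto
qed

lemma sets_extinction_lang: "extinction_lang \<in> sets (coin_measure three_letters)"
proof -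
  have "extinct_by n \<in> sets (coin_measure three_letters)" for n
    by (induction n) (auto intro: sets_extinction_step)
  then show ?thesis
    unfolding extinction_lang_eq_UN by blast
qed

lemma vimage_tree_node_extinction_lang:
  "(\<lambda>(a, l, r). tree_node a l r) -` extinction_lang \<inter>
      space (uniform_count_measure three_letters \<Otimes>\<^sub>M (coin_measure three_letters \<Otimes>\<^sub>M coin_measure three_letters))
    = {0} \<times> space (coin_measure three_letters \<Otimes>\<^sub>M coin_measure three_letters) \<union>
      {2} \<times> (extinction_lang \<times> extinction_lang)"
proof -
  have labels: "t x \<in> three_letters" if "t \<in> extinction_lang" for t x
    using that by (simp add: det_lang_def)
  have letters: "0 \<in> three_letters" "2 \<in> three_letters"
    by (simp_all add: three_letters_def)
  have "tree_node a l r \<in> extinction_lang \<longleftrightarrow>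
      a \<in> three_letters \<and> (\<forall>v. l v \<in> three_letters) \<and> (\<forall>v. r v \<in> three_letters) \<and>
      (a = 0 \<or> a = 2 \<and> l \<in> extinction_lang \<and> r \<in> extinction_lang)" for a l r
    by (subst extinction_step_lang[symmetric]) (simp add: extinction_step_def tree_node_labels_iff)
  then show ?thesis
    by (auto simp: space_pair_measure space_coin_measure space_uniform_count_measure letters intro: labels)
qed

lemma measure_extinction_lang:
  "measure (coin_measure three_letters) extinction_lang =
    1/3 + (measure (coin_measure three_letters) extinction_lang)^2 / 3"
proof -
  let ?U = "uniform_count_measure three_letters" and ?S = "coin_measure three_letters"
  let ?E = extinction_lang and ?node = "\<lambda>(a, l, r). tree_node a l r"
  have U: "prob_space ?U"
    by (simp add: prob_space_uniform_count_measure three_letters_def)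
  have S: "prob_space ?S"
    by (simp add: prob_space_coin_measure three_letters_def)
  interpret SS: pair_prob_space ?S ?S
    using S by (simp add: pair_prob_space_def pair_sigma_finite_def prob_space_imp_sigma_finite)
  interpret USS: pair_prob_space ?U "?S \<Otimes>\<^sub>M ?S"
    using U SS.P.prob_space_axioms
    by (simp add: pair_prob_space_def pair_sigma_finite_def prob_space_imp_sigma_finite)
  have letters: "{0} \<in> sets ?U" "{2} \<in> sets ?U" "measure ?U {0} = 1/3" "measure ?U {2} = 1/3"
    by (simp_all add: sets_uniform_count_measure measure_uniform_count_measure three_letters_def)
  have node: "?node \<in> ?U \<Otimes>\<^sub>M (?S \<Otimes>\<^sub>M ?S) \<rightarrow>\<^sub>M ?S"
    unfolding coin_measure_def by (rule measurable_tree_node)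
  have "measure ?S ?E = measure (distr (?U \<Otimes>\<^sub>M (?S \<Otimes>\<^sub>M ?S)) ?S ?node) ?E"
    unfolding coin_measure_def by (simp only: distr_tree_node[OF U])
  also have "\<dots> = measure (?U \<Otimes>\<^sub>M (?S \<Otimes>\<^sub>M ?S)) ({0} \<times> space (?S \<Otimes>\<^sub>M ?S) \<union> {2} \<times> (?E \<times> ?E))"
    by (simp only: measure_distr[OF node sets_extinction_lang] vimage_tree_node_extinction_lang)
  also have "\<dots> = measure (?U \<Otimes>\<^sub>M (?S \<Otimes>\<^sub>M ?S)) ({0} \<times> space (?S \<Otimes>\<^sub>M ?S)) +
      measure (?U \<Otimes>\<^sub>M (?S \<Otimes>\<^sub>M ?S)) ({2} \<times> (?E \<times> ?E))"
    using sets_extinction_lang letters by (intro USS.finite_measure_Union) auto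
  also have "\<dots> = measure ?U {0} * 1 + measure ?U {2} * (measure ?S ?E * measure ?S ?E)"
    using sets_extinction_lang letters
    by (simp add: measure_pair_measure_Times SS.P.prob_space prob_space_imp_sigma_finite[OF S]
        SS.P.sigma_finite_measure_axioms)
  finally show ?thesis
    by (simp add: letters power2_eq_square)
qed

lemma measure_extinction_lang_irrational:
  "measure (coin_measure three_letters) extinction_lang \<notin> \<rat>"
proof
  let ?x = "measure (coin_measure three_letters) extinction_lang"
  assume "?x \<in> \<rat>"
  then have "3 - 2 * ?x \<in> \<rat>"
    by simp
  moreover have "(3 - 2 * ?x)\<^sup>2 = real 5"
    using measure_extinction_lang by (simp add: power2_eq_square algebra_simps)
  moreover have "prime (5 :: nat)"
    by code_simp
  ultimately show False
    using prime_not_rat_square by blast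
qed

theorem proposition1:
  shows "\<exists>(A :: nat set) (Q :: nat set) q0 delta (\<pi> :: nat \<Rightarrow> nat).
           finite A \<and> A \<noteq> {} \<and> det_automaton A Q q0 delta \<and>
           det_lang A q0 delta \<pi> \<in> sets (coin_measure A) \<and>
           measure (coin_measure A) (det_lang A q0 delta \<pi>) \<notin> \<rat>"
proof -
  have "finite three_letters" "three_letters \<noteq> {}"
    by (simp_all add: three_letters_def)
  then show ?thesis
    using det_automaton_extinction sets_extinction_lang measure_extinction_lang_irrational by blast
qed

end
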